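(* Let $\ast$ be any of the four standard graph products (Cartesian $\square$, direct $\times$, lexicographic $\circ$, strong $\boxtimes$). No minimum counterexample to the conjecture "for every graph $G$, $\chi(G)\le \mathrm{toi}(G)$" is of the form $G \ast H$.
   Context: All graphs are finite, simple and loopless. $\chi(G)$ is the chromatic number. A graph $G$ contains $H$ as a strong immersion if there is an injective map $\varphi\colon V(H)\to V(G)$ and, for each edge $uv\in E(H)$, a path in $G$ joining $\varphi(u),\varphi(v)$, such that these paths are pairwise edge-disjoint and no terminal is an interior vertex of any such path; it is totally odd if all paths have odd length. $\mathrm{toi}(G)$ is the maximum $t$ such that $G$ contains a totally odd strong immersion of $K_t$. Products: Cartesian $G\square H$ on $V(G)\times V(H)$ with $(g_1,h_1)\sim(g_2,h_2)$ iff ($g_1=g_2$, $h_1h_2\in E(H)$) or ($h_1=h_2$, $g_1g_2\in E(G)$); direct $G\times H$ with adjacency iff $g_1g_2\in E(G)$ and $h_1h_2\in E(H)$; strong $G\boxtimes H=(G\square H)\cup(G\times H)$; lexicographic $G\circ H$ with adjacency iff $g_1g_2\in E(G)$, or $g_1=g_2$ and $h_1h_2\in E(H)$. *)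

theory Defs
  imports Main
begin

type_synonym 'a graph = "'a set \<times> ('a \<Rightarrow> 'a \<Rightarrow> bool)"

definition verts :: "'a graph \<Rightarrow> 'a set" where "verts G = fst G"
definition adj :: "'a graph \<Rightarrow> 'a \<Rightarrow> 'a \<Rightarrow> bool" where "adj G = snd G"

definition simple_graph :: "'a graph \<Rightarrow> bool" where
  "simple_graph G \<longleftrightarrow> finite (verts G)
     \<and> (\<forall>u v. adj G u v \<longrightarrow> u \<in> verts G \<and> v \<in> verts G)
     \<and> (\<forall>u v. adj G u v \<longrightarrow> adj G v u)
     \<and> (\<forall>u. \<not> adj G u u)"

definition chi :: "'a graph \<Rightarrow> nat" where
  "chi G = (LEAST k. \<exists>c :: 'a \<Rightarrow> nat. (\<forall>v\<in>verts G. c v < k)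
              \<and> (\<forall>u v. adj G u v \<longrightarrow> c u \<noteq> c v))"

definition is_path :: "'a graph \<Rightarrow> 'a list \<Rightarrow> bool" where
  "is_path G ps \<longleftrightarrow> length ps \<ge> 2 \<and> distinct ps \<and> set ps \<subseteq> verts G
     \<and> (\<forall>k. Suc k < length ps \<longrightarrow> adj G (ps ! k) (ps ! Suc k))"

definition path_edges :: "'a list \<Rightarrow> 'a set set" where
  "path_edges ps = {{ps ! k, ps ! Suc k} | k. Suc k < length ps}"

definition path_interior :: "'a list \<Rightarrow> 'a set" where
  "path_interior ps = set (butlast (tl ps))"

text \<open>G contains a totally odd strong immersion of K_t: terminals phi 0..phi(t-1),
  and for each edge {i,j} (i<j) of K_t a path P i j from phi i to phi j of odd length.\<close>
definition has_toi_Kt :: "'a graph \<Rightarrow> nat \<Rightarrow> bool" where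
  "has_toi_Kt G t \<longleftrightarrow> (\<exists>(phi :: nat \<Rightarrow> 'a) (P :: nat \<Rightarrow> nat \<Rightarrow> 'a list).
      inj_on phi {0..<t} \<and> phi ` {0..<t} \<subseteq> verts G
    \<and> (\<forall>i j. i < j \<and> j < t \<longrightarrow>
          is_path G (P i j) \<and> hd (P i j) = phi i \<and> last (P i j) = phi j
          \<and> odd (length (P i j) - 1)
          \<and> (\<forall>k<t. phi k \<notin> path_interior (P i j)))
    \<and> (\<forall>i j k l. i < j \<and> j < t \<and> k < l \<and> l < t \<and> (i, j) \<noteq> (k, l) \<longrightarrow>
          path_edges (P i j) \<inter> path_edges (P k l) = {}))"

definition toi :: "'a graph \<Rightarrow> nat" where
  "toi G = Max {t. has_toi_Kt G t}"

datatype prodkind = Cartesian | Direct | Strong | Lexicographic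

definition cart_adj :: "'a graph \<Rightarrow> 'b graph \<Rightarrow> 'a \<times> 'b \<Rightarrow> 'a \<times> 'b \<Rightarrow> bool" where
  "cart_adj G H x y \<longleftrightarrow>
     (fst x = fst y \<and> fst x \<in> verts G \<and> adj H (snd x) (snd y))
   \<or> (snd x = snd y \<and> snd x \<in> verts H \<and> adj G (fst x) (fst y))"

definition direct_adj :: "'a graph \<Rightarrow> 'b graph \<Rightarrow> 'a \<times> 'b \<Rightarrow> 'a \<times> 'b \<Rightarrow> bool" where
  "direct_adj G H x y \<longleftrightarrow> adj G (fst x) (fst y) \<and> adj H (snd x) (snd y)"

definition lex_adj :: "'a graph \<Rightarrow> 'b graph \<Rightarrow> 'a \<times> 'b \<Rightarrow> 'a \<times> 'b \<Rightarrow> bool" where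
  "lex_adj G H x y \<longleftrightarrow>
     (adj G (fst x) (fst y) \<and> snd x \<in> verts H \<and> snd y \<in> verts H)
   \<or> (fst x = fst y \<and> fst x \<in> verts G \<and> adj H (snd x) (snd y))"

fun gprod :: "prodkind \<Rightarrow> 'a graph \<Rightarrow> 'b graph \<Rightarrow> ('a \<times> 'b) graph" where
  "gprod Cartesian G H = (verts G \<times> verts H, cart_adj G H)"
| "gprod Direct G H = (verts G \<times> verts H, direct_adj G H)"
| "gprod Strong G H = (verts G \<times> verts H, \<lambda>x y. cart_adj G H x y \<or> direct_adj G H x y)"
| "gprod Lexicographic G H = (verts G \<times> verts H, lex_adj G H)"

text \<open>Minimum counterexample (fewest vertices) to chi G \<le> toi G. Every finite graph is
  isomorphic to one on natural-number vertices, so smaller graphs range over nat graphs.\<close>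
definition min_counterexample :: "'a graph \<Rightarrow> bool" where
  "min_counterexample X \<longleftrightarrow> simple_graph X \<and> toi X < chi X
     \<and> (\<forall>G' :: nat graph. simple_graph G' \<and> card (verts G') < card (verts X)
            \<longrightarrow> chi G' \<le> toi G')"

end

theory Submission
  imports Defs
begin

(* A minimum counterexample G * H has more vertices than either factor, so chi G <= toi G and
   chi H <= toi H, and it suffices that every product inherits this inequality.  For the Cartesian
   product chi is at most max (chi G) (chi H), while G and H are subgraphs of it.  For the direct
   product chi is at most min (chi G) (chi H), while immersions of K_t in G and in H combine into
   one in the product.  For the strong and lexicographic products chi is at most chi G * chi H,
   while immersions of K_a in G and of K_b in H give one of K_ab in the strong product, a spanning
   subgraph of the lexicographic one: terminals (i, x) and (j, y) are joined by a copy of a path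
   of H inside a fibre, of a path of G inside a fibre, or by walking along P i j and Q x y
   simultaneously.  Two paths of odd length are walked in lockstep by letting the shorter one
   bounce on its last edge, which keeps the length of the combined path odd. *)

lemma simple_graph_adjD:
  assumes "simple_graph G" "adj G u v"
  shows "u \<in> verts G" "v \<in> verts G" "adj G v u" "u \<noteq> v"
  using assms unfolding simple_graph_def by metis+

lemma simple_graph_adj_commute: "simple_graph G \<Longrightarrow> adj G u v \<longleftrightarrow> adj G v u"
  by (auto dest: simple_graph_adjD(3))

lemma simple_graph_finite: "simple_graph G \<Longrightarrow> finite (verts G)"
  by (simp add: simple_graph_def)

lemma path_edgesI: "Suc k < length ps \<Longrightarrow> {ps ! k, ps ! Suc k} \<in> path_edges ps"
  unfolding path_edges_def by blast

lemma path_edgesE: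
  assumes "e \<in> path_edges ps"
  obtains k where "Suc k < length ps" "e = {ps ! k, ps ! Suc k}"
  using assms unfolding path_edges_def by blast

lemma path_edges_subset: "e \<in> path_edges ps \<Longrightarrow> e \<subseteq> set ps"
  by (erule path_edgesE) auto

lemma path_edge_not_singleton:
  assumes "e \<in> path_edges ps" "distinct ps"
  shows "e \<noteq> {c}"
proof -
  from assms(1) obtain k where k: "Suc k < length ps" "e = {ps ! k, ps ! Suc k}"
    by (rule path_edgesE)
  with assms(2) have "ps ! k \<noteq> ps ! Suc k" by (simp add: nth_eq_iff_index_eq)
  with k(2) show ?thesis by (metis insertI1 insert_commute singletonD)
qed

lemma in_path_interior_iff:
  "z \<in> path_interior ps \<longleftrightarrow> (\<exists>k. 0 < k \<and> Suc k < length ps \<and> z = ps ! k)"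
proof
  assume "z \<in> path_interior ps"
  then obtain m where "m < length (butlast (tl ps))" "z = butlast (tl ps) ! m"
    by (auto simp: path_interior_def in_set_conv_nth)
  then show "\<exists>k. 0 < k \<and> Suc k < length ps \<and> z = ps ! k"
    by (intro exI[of _ "Suc m"]) (auto simp: nth_butlast nth_tl)
next
  assume "\<exists>k. 0 < k \<and> Suc k < length ps \<and> z = ps ! k"
  then obtain m where "Suc (Suc m) < length ps" "z = ps ! Suc m"
    by (metis gr0_implies_Suc)
  then show "z \<in> path_interior ps"
    unfolding path_interior_def in_set_conv_nth
    by (intro exI[of _ m]) (auto simp: nth_butlast nth_tl)
qed

lemma path_interior_subset: "path_interior ps \<subseteq> set ps"
  by (auto simp: in_path_interior_iff)

lemma path_edges_map: "path_edges (map f ps) = (\<lambda>e. f ` e) ` path_edges ps"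
proof -
  have "path_edges (map f ps) = {f ` {ps ! k, ps ! Suc k} | k. Suc k < length ps}"
    unfolding path_edges_def by auto (metis Suc_lessD nth_map)
  also have "\<dots> = (\<lambda>e. f ` e) ` path_edges ps"
    unfolding path_edges_def by blast
  finally show ?thesis .
qed

lemma path_interior_map: "path_interior (map f ps) = f ` path_interior ps"
  unfolding path_interior_def by (simp add: map_butlast[symmetric] map_tl[symmetric])

lemma is_path_map:
  assumes "is_path G ps" "inj_on f (set ps)" "f ` set ps \<subseteq> verts X"
    "\<And>u v. adj G u v \<Longrightarrow> adj X (f u) (f v)"
  shows "is_path X (map f ps)"
  using assms unfolding is_path_def by (auto simp: distinct_map)

lemma rev_nth_pair:
  assumes "Suc k < length ps"
  obtains m where "Suc m < length ps" "rev ps ! k = ps ! Suc m" "rev ps ! Suc k = ps ! m"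
proof
  let ?m = "length ps - Suc (Suc k)"
  show "Suc ?m < length ps" "rev ps ! k = ps ! Suc ?m" "rev ps ! Suc k = ps ! ?m"
    using assms by (auto simp: rev_nth Suc_diff_Suc)
qed

lemma path_edges_rev_subset: "path_edges (rev ps) \<subseteq> path_edges ps"
proof
  fix e assume "e \<in> path_edges (rev ps)"
  then obtain k where k: "Suc k < length ps" "e = {rev ps ! k, rev ps ! Suc k}"
    by (auto elim: path_edgesE)
  then obtain m where "Suc m < length ps" "e = {ps ! m, ps ! Suc m}"
    by (auto elim: rev_nth_pair simp: insert_commute)
  then show "e \<in> path_edges ps" by (simp add: path_edgesI)
qed

lemma path_edges_rev: "path_edges (rev ps) = path_edges ps"
  using path_edges_rev_subset[of ps] path_edges_rev_subset[of "rev ps"] by simp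

lemma path_interior_rev: "path_interior (rev ps) = path_interior ps"
proof -
  have "tl (rev ps) = rev (butlast ps)"
    by (metis butlast_rev rev_rev_ident)
  then show ?thesis
    unfolding path_interior_def by (simp add: butlast_tl)
qed

lemma is_path_rev:
  assumes "simple_graph G" "is_path G ps"
  shows "is_path G (rev ps)"
  unfolding is_path_def
proof (intro conjI allI impI)
  show "2 \<le> length (rev ps)" "distinct (rev ps)" "set (rev ps) \<subseteq> verts G"
    using assms(2) unfolding is_path_def by auto
  fix k assume "Suc k < length (rev ps)"
  then obtain m where m: "Suc m < length ps" "rev ps ! k = ps ! Suc m" "rev ps ! Suc k = ps ! m"
    by (auto elim: rev_nth_pair)
  then have "adj G (ps ! m) (ps ! Suc m)" using assms(2) unfolding is_path_def by blast
  then show "adj G (rev ps ! k) (rev ps ! Suc k)"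
    using m(2,3) simple_graph_adjD(3)[OF assms(1)] by simp
qed

section \<open>Totally odd immersions\<close>

locale odd_immersion =
  fixes G :: "'a graph" and t :: nat and phi :: "nat \<Rightarrow> 'a" and P :: "nat \<Rightarrow> nat \<Rightarrow> 'a list"
  assumes terminals_inj: "inj_on phi {0..<t}"
    and terminals_verts: "phi ` {0..<t} \<subseteq> verts G"
    and path: "\<And>i j. i < j \<Longrightarrow> j < t \<Longrightarrow> is_path G (P i j)"
    and path_hd: "\<And>i j. i < j \<Longrightarrow> j < t \<Longrightarrow> hd (P i j) = phi i"
    and path_last: "\<And>i j. i < j \<Longrightarrow> j < t \<Longrightarrow> last (P i j) = phi j"
    and path_odd: "\<And>i j. i < j \<Longrightarrow> j < t \<Longrightarrow> odd (length (P i j) - 1)"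
    and terminal_not_interior:
      "\<And>i j k. i < j \<Longrightarrow> j < t \<Longrightarrow> k < t \<Longrightarrow> phi k \<notin> path_interior (P i j)"
    and edge_disjoint: "\<And>i j k l. i < j \<Longrightarrow> j < t \<Longrightarrow> k < l \<Longrightarrow> l < t \<Longrightarrow> (i, j) \<noteq> (k, l) \<Longrightarrow>
          path_edges (P i j) \<inter> path_edges (P k l) = {}"

lemma has_toi_Kt_iff: "has_toi_Kt G t \<longleftrightarrow> (\<exists>phi P. odd_immersion G t phi P)"
  unfolding has_toi_Kt_def odd_immersion_def by (simp add: imp_conjR imp_conjL all_conj_distrib)

lemma has_toi_Kt_0: "has_toi_Kt G 0"
  unfolding has_toi_Kt_iff odd_immersion_def by simp

context odd_immersion
begin

lemma terminal_in_verts: "k < t \<Longrightarrow> phi k \<in> verts G"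
  using terminals_verts by auto

lemma restrict: "s \<le> t \<Longrightarrow> odd_immersion G s phi P"
  by unfold_locales
    (use terminals_inj terminals_verts path path_hd path_last path_odd terminal_not_interior edge_disjoint
      in \<open>auto intro: inj_on_subset\<close>)

lemma map_injective_hom:
  assumes inj: "inj_on f (verts G)" and into: "f ` verts G \<subseteq> verts X"
    and hom: "\<And>u v. adj G u v \<Longrightarrow> adj X (f u) (f v)"
  shows "odd_immersion X t (f \<circ> phi) (\<lambda>i j. map f (P i j))"
proof
  have set_P: "set (P i j) \<subseteq> verts G" if "i < j" "j < t" for i j
    using path[OF that] unfolding is_path_def by blast
  have ne_P: "P i j \<noteq> []" if "i < j" "j < t" for i j
    using path[OF that] unfolding is_path_def by auto
  show "inj_on (f \<circ> phi) {0..<t}"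
    using terminals_inj inj_on_subset[OF inj terminals_verts] by (rule comp_inj_on)
  show "(f \<circ> phi) ` {0..<t} \<subseteq> verts X"
    using terminals_verts into by auto
  fix i j assume ij: "i < j" "j < t"
  show "is_path X (map f (P i j))"
  proof (rule is_path_map[OF path[OF ij] _ _ hom])
    show "inj_on f (set (P i j))" using inj set_P[OF ij] by (rule inj_on_subset)
    show "f ` set (P i j) \<subseteq> verts X" using into set_P[OF ij] by blast
  qed
  show "hd (map f (P i j)) = (f \<circ> phi) i" "last (map f (P i j)) = (f \<circ> phi) j"
    using ne_P[OF ij] path_hd[OF ij] path_last[OF ij] by (simp_all add: hd_map last_map)
  show "odd (length (map f (P i j)) - 1)"
    using path_odd[OF ij] by simp
  show "(f \<circ> phi) k \<notin> path_interior (map f (P i j))" if "k < t" for k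
  proof
    assume "(f \<circ> phi) k \<in> path_interior (map f (P i j))"
    then obtain x where x: "x \<in> path_interior (P i j)" "f (phi k) = f x"
      unfolding path_interior_map by auto
    moreover have "x \<in> verts G"
      using x(1) path_interior_subset[of "P i j"] set_P[OF ij] by blast
    ultimately have "phi k = x"
      using inj terminal_in_verts[OF that] by (auto dest: inj_onD)
    with x(1) terminal_not_interior[OF ij that] show False by simp
  qed
  fix k l assume kl: "k < l" "l < t" "(i, j) \<noteq> (k, l)"
  show "path_edges (map f (P i j)) \<inter> path_edges (map f (P k l)) = {}"
  proof (rule ccontr)
    assume "path_edges (map f (P i j)) \<inter> path_edges (map f (P k l)) \<noteq> {}"
    then obtain e1 e2 where e: "e1 \<in> path_edges (P i j)" "e2 \<in> path_edges (P k l)" "f ` e1 = f ` e2"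
      unfolding path_edges_map by auto
    have "e1 \<subseteq> verts G" "e2 \<subseteq> verts G"
      using e(1,2) set_P[OF ij] set_P[OF kl(1,2)] by (blast dest: path_edges_subset)+
    then have "e1 = e2" using inj_on_image_eq_iff[OF inj] e(3) by blast
    with e(1,2) edge_disjoint[OF ij kl] show False by blast
  qed
qed

end

lemma has_toi_Kt_mono: "has_toi_Kt G t \<Longrightarrow> s \<le> t \<Longrightarrow> has_toi_Kt G s"
  unfolding has_toi_Kt_iff by (blast dest: odd_immersion.restrict)

lemma has_toi_Kt_injective_hom:
  assumes "has_toi_Kt G t" "inj_on f (verts G)" "f ` verts G \<subseteq> verts X"
    "\<And>u v. adj G u v \<Longrightarrow> adj X (f u) (f v)"
  shows "has_toi_Kt X t"
  using assms unfolding has_toi_Kt_iff by (blast dest: odd_immersion.map_injective_hom)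

lemma has_toi_Kt_le_card:
  assumes "finite (verts G)" "has_toi_Kt G t"
  shows "t \<le> card (verts G)"
proof -
  from assms(2) obtain phi P where "odd_immersion G t phi P"
    unfolding has_toi_Kt_iff by blast
  then have "inj_on phi {0..<t}" "phi ` {0..<t} \<subseteq> verts G"
    by (simp_all add: odd_immersion.terminals_inj odd_immersion.terminals_verts)
  then have "t = card (phi ` {0..<t})" by (simp add: card_image)
  also have "\<dots> \<le> card (verts G)"
    using card_mono[OF assms(1) \<open>phi ` {0..<t} \<subseteq> verts G\<close>] .
  finally show ?thesis .
qed

lemma finite_has_toi_Kt:
  assumes "finite (verts G)"
  shows "finite {t. has_toi_Kt G t}"
proof (rule finite_subset)
  show "{t. has_toi_Kt G t} \<subseteq> {..card (verts G)}"
    using has_toi_Kt_le_card[OF assms] by blast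
qed simp

lemma has_toi_Kt_le_toi: "finite (verts G) \<Longrightarrow> has_toi_Kt G t \<Longrightarrow> t \<le> toi G"
  unfolding toi_def by (rule Max_ge[OF finite_has_toi_Kt]) simp_all

lemma has_toi_Kt_toi:
  assumes "finite (verts G)"
  shows "has_toi_Kt G (toi G)"
proof -
  have "{t. has_toi_Kt G t} \<noteq> {}" using has_toi_Kt_0 by blast
  from Max_in[OF finite_has_toi_Kt[OF assms] this] show ?thesis
    unfolding toi_def by simp
qed

lemma toi_le_of_injective_hom:
  assumes "finite (verts G)" "finite (verts X)" "inj_on f (verts G)" "f ` verts G \<subseteq> verts X"
    "\<And>u v. adj G u v \<Longrightarrow> adj X (f u) (f v)"
  shows "toi G \<le> toi X"
  using assms by (blast intro: has_toi_Kt_le_toi has_toi_Kt_injective_hom has_toi_Kt_toi)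

section \<open>Chromatic number and relabelling\<close>

lemma chi_le_colouring:
  assumes "\<forall>v\<in>verts G. c v < k" "\<forall>u v. adj G u v \<longrightarrow> c u \<noteq> c v"
  shows "chi G \<le> k"
  unfolding chi_def by (rule Least_le) (use assms in blast)

lemma chi_colouringE:
  assumes "simple_graph G"
  obtains c :: "'a \<Rightarrow> nat" where "\<forall>v\<in>verts G. c v < chi G" "\<forall>u v. adj G u v \<longrightarrow> c u \<noteq> c v"
proof -
  obtain f :: "'a \<Rightarrow> nat" and n where f: "f ` verts G = {i. i < n}" "inj_on f (verts G)"
    using finite_imp_inj_to_nat_seg[OF simple_graph_finite[OF assms]] by blast
  have "\<forall>u v. adj G u v \<longrightarrow> f u \<noteq> f v"
    using simple_graph_adjD[OF assms] f(2) by (metis inj_onD)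
  moreover have "\<forall>v\<in>verts G. f v < n" using f(1) by blast
  ultimately have "\<exists>k. \<exists>c :: 'a \<Rightarrow> nat. (\<forall>v\<in>verts G. c v < k) \<and> (\<forall>u v. adj G u v \<longrightarrow> c u \<noteq> c v)"
    by blast
  from LeastI_ex[OF this] show ?thesis
    using that unfolding chi_def by blast
qed

lemma chi_le_of_hom:
  assumes "simple_graph X" "f ` verts G \<subseteq> verts X" "\<And>u v. adj G u v \<Longrightarrow> adj X (f u) (f v)"
  shows "chi G \<le> chi X"
proof -
  obtain c where c: "\<forall>v\<in>verts X. c v < chi X" "\<forall>u v. adj X u v \<longrightarrow> c u \<noteq> c v"
    using chi_colouringE[OF assms(1)] .
  show ?thesis
    by (rule chi_le_colouring[of G "c \<circ> f"]) (use c assms(2,3) in auto)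
qed

definition image_graph :: "('a \<Rightarrow> 'b) \<Rightarrow> 'a graph \<Rightarrow> 'b graph" where
  "image_graph f G = (f ` verts G, \<lambda>a b. \<exists>u v. adj G u v \<and> a = f u \<and> b = f v)"

lemma verts_image_graph: "verts (image_graph f G) = f ` verts G"
  by (simp add: image_graph_def verts_def)

lemma adj_image_graph: "adj (image_graph f G) a b \<longleftrightarrow> (\<exists>u v. adj G u v \<and> a = f u \<and> b = f v)"
  by (simp add: image_graph_def adj_def)

lemma simple_graph_image_graph:
  assumes G: "simple_graph G" and inj: "inj_on f (verts G)"
  shows "simple_graph (image_graph f G)"
proof -
  let ?G' = "image_graph f G"
  have "finite (verts ?G')"
    using simple_graph_finite[OF G] by (simp add: verts_image_graph)
  moreover have "a \<in> verts ?G' \<and> b \<in> verts ?G' \<and> adj ?G' b a \<and> a \<noteq> b" if ab: "adj ?G' a b" for a b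
  proof -
    obtain u v where uv: "adj G u v" "a = f u" "b = f v"
      using ab unfolding adj_image_graph by blast
    note G_uv = simple_graph_adjD[OF G uv(1)]
    have "f u \<noteq> f v" using inj_onD[OF inj _ G_uv(1,2)] G_uv(4) by blast
    then show ?thesis
      using G_uv(1-3) uv(2,3) unfolding verts_image_graph adj_image_graph by blast
  qed
  ultimately show ?thesis
    unfolding simple_graph_def by blast
qed

lemma
  assumes "simple_graph G" "inj_on f (verts G)"
  shows chi_image_graph: "chi (image_graph f G) = chi G"
    and toi_image_graph: "toi (image_graph f G) = toi G"
proof -
  let ?G' = "image_graph f G" and ?g = "inv_into (verts G) f"
  have fin: "finite (verts G)" "finite (verts ?G')"
    using simple_graph_finite[OF assms(1)] by (simp_all add: verts_image_graph)
  have hom: "adj ?G' (f u) (f v)" if "adj G u v" for u v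
    unfolding adj_image_graph using that by blast
  have hom_inv: "adj G (?g a) (?g b)" if ab: "adj ?G' a b" for a b
  proof -
    obtain u v where uv: "adj G u v" "a = f u" "b = f v"
      using ab unfolding adj_image_graph by blast
    moreover have "u \<in> verts G" "v \<in> verts G"
      using simple_graph_adjD[OF assms(1) uv(1)] by simp_all
    ultimately show ?thesis
      using assms(2) by simp
  qed
  have inv: "inj_on ?g (verts ?G')" "?g ` verts ?G' \<subseteq> verts G"
    using assms(2) by (auto simp: verts_image_graph inj_on_inv_into inv_into_into)
  have into: "f ` verts G \<subseteq> verts ?G'"
    by (simp add: verts_image_graph)
  show "chi ?G' = chi G"
    using chi_le_of_hom[OF simple_graph_image_graph[OF assms] into hom] chi_le_of_hom[OF assms(1) inv(2) hom_inv]
    by simp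
  show "toi ?G' = toi G"
    using toi_le_of_injective_hom[OF fin(1,2) assms(2) into hom] toi_le_of_injective_hom[OF fin(2,1) inv hom_inv]
    by simp
qed

(* Minimality in min_counterexample only ranges over graphs on nat, so a smaller graph is
   first relabelled injectively into nat. *)
lemma min_counterexample_smaller:
  fixes X :: "'a graph" and G :: "'b graph"
  assumes "min_counterexample X" "simple_graph G" "card (verts G) < card (verts X)"
  shows "chi G \<le> toi G"
proof -
  obtain f :: "'b \<Rightarrow> nat" where f: "inj_on f (verts G)"
    using finite_imp_inj_to_nat_seg[OF simple_graph_finite[OF assms(2)]] by blast
  have "card (verts (image_graph f G)) < card (verts X)"
    using assms(3) f by (simp add: verts_image_graph card_image)
  then have "chi (image_graph f G) \<le> toi (image_graph f G)"
    using assms(1) simple_graph_image_graph[OF assms(2) f] unfolding min_counterexample_def by blast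
  then show ?thesis
    by (simp add: chi_image_graph[OF assms(2) f] toi_image_graph[OF assms(2) f])
qed

section \<open>Walking along two paths in lockstep\<close>

lemma two_le_if_odd_pred: "odd (n - 1) \<Longrightarrow> 2 \<le> (n :: nat)"
  by presburger

(* Position at time k of a walk that runs along 0, ..., L and then oscillates on its last edge. *)
definition bounce :: "nat \<Rightarrow> nat \<Rightarrow> nat" where
  "bounce L k = (if k \<le> L then k else if even (k - L) then L else L - 1)"

lemma bounce_le: "bounce L k \<le> L"
  unfolding bounce_def by auto

lemma bounce_eq: "k \<le> L \<Longrightarrow> bounce L k = k"
  unfolding bounce_def by auto

lemma bounce_end: "odd L \<Longrightarrow> odd N \<Longrightarrow> L \<le> N \<Longrightarrow> bounce L N = L"
  unfolding bounce_def by auto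

lemma even_bounce_add: "0 < L \<Longrightarrow> even (bounce L k + k)"
  unfolding bounce_def by auto

lemma bounce_Suc:
  assumes "0 < L"
  shows "\<exists>m<L. {bounce L k, bounce L (Suc k)} = {m, Suc m}"
proof (cases "Suc k \<le> L")
  case True
  then show ?thesis by (intro exI[of _ k]) (simp add: bounce_eq)
next
  case False
  then have "L \<le> k" by simp
  then have "{bounce L k, bounce L (Suc k)} = {L - 1, Suc (L - 1)}"
    using assms unfolding bounce_def by (cases "k = L") (auto simp: Suc_diff_le)
  then show ?thesis using assms by (intro exI[of _ "L - 1"]) simp
qed

definition bounce_walk :: "'a list \<Rightarrow> nat \<Rightarrow> 'a" where
  "bounce_walk ps k = ps ! bounce (length ps - 1) k"

lemma bounce_walk_nth: "k < length ps \<Longrightarrow> bounce_walk ps k = ps ! k"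
  unfolding bounce_walk_def by (simp add: bounce_eq)

lemma bounce_walk_last:
  "odd (length ps - 1) \<Longrightarrow> odd N \<Longrightarrow> length ps - 1 \<le> N \<Longrightarrow> bounce_walk ps N = last ps"
  unfolding bounce_walk_def by (simp add: bounce_end last_conv_nth)

lemma bounce_walk_parity:
  assumes "2 \<le> length ps"
  shows "\<exists>u<length ps. bounce_walk ps k = ps ! u \<and> even (u + k)"
  using bounce_le[of "length ps - 1" k] even_bounce_add[of "length ps - 1" k] assms
  unfolding bounce_walk_def by (intro exI[of _ "bounce (length ps - 1) k"]) auto

lemma bounce_walk_edge:
  assumes "2 \<le> length ps"
  shows "{bounce_walk ps k, bounce_walk ps (Suc k)} \<in> path_edges ps"
proof -
  obtain m where "m < length ps - 1" "{bounce (length ps - 1) k, bounce (length ps - 1) (Suc k)} = {m, Suc m}"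
    using bounce_Suc[of "length ps - 1" k] assms by auto
  then have "Suc m < length ps" "{bounce_walk ps k, bounce_walk ps (Suc k)} = {ps ! m, ps ! Suc m}"
    unfolding bounce_walk_def by (auto simp: doubleton_eq_iff)
  then show ?thesis by (simp add: path_edgesI)
qed

lemma adj_of_path_edge:
  assumes "simple_graph G" "is_path G ps" "{a, b} \<in> path_edges ps"
  shows "adj G a b"
proof -
  obtain m where m: "Suc m < length ps" "{a, b} = {ps ! m, ps ! Suc m}"
    using assms(3) by (rule path_edgesE)
  have "adj G (ps ! m) (ps ! Suc m)"
    using assms(2) m(1) unfolding is_path_def by blast
  with m(2) show ?thesis
    using simple_graph_adjD(3)[OF assms(1)] by (auto simp: doubleton_eq_iff)
qed

definition zip_path :: "'a list \<Rightarrow> 'b list \<Rightarrow> ('a \<times> 'b) list" where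
  "zip_path ps qs = map (\<lambda>k. (bounce_walk ps k, bounce_walk qs k)) [0..<max (length ps) (length qs)]"

lemma length_zip_path: "length (zip_path ps qs) = max (length ps) (length qs)"
  unfolding zip_path_def by simp

lemma nth_zip_path:
  "k < max (length ps) (length qs) \<Longrightarrow> zip_path ps qs ! k = (bounce_walk ps k, bounce_walk qs k)"
  unfolding zip_path_def by simp

lemma path_edges_zip_path:
  assumes "e \<in> path_edges (zip_path ps qs)" "2 \<le> length ps" "2 \<le> length qs"
  shows "fst ` e \<in> path_edges ps" "snd ` e \<in> path_edges qs"
proof -
  obtain k where k: "Suc k < max (length ps) (length qs)"
    "e = {zip_path ps qs ! k, zip_path ps qs ! Suc k}"
    using assms(1) by (auto elim: path_edgesE simp: length_zip_path)
  then have "e = {(bounce_walk ps k, bounce_walk qs k), (bounce_walk ps (Suc k), bounce_walk qs (Suc k))}"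
    by (simp add: nth_zip_path)
  then show "fst ` e \<in> path_edges ps" "snd ` e \<in> path_edges qs"
    using bounce_walk_edge assms(2,3) by simp_all
qed

lemma path_interior_zip_path:
  assumes "z \<in> path_interior (zip_path ps qs)"
  shows "fst z \<in> path_interior ps \<or> snd z \<in> path_interior qs"
proof -
  obtain k where k: "0 < k" "Suc k < max (length ps) (length qs)" "z = zip_path ps qs ! k"
    using assms by (auto simp: in_path_interior_iff length_zip_path)
  then have z: "z = (bounce_walk ps k, bounce_walk qs k)" by (simp add: nth_zip_path)
  show ?thesis
  proof (cases "length qs \<le> length ps")
    case True
    have "fst z = ps ! k" "Suc k < length ps" using True k(2) z by (simp_all add: bounce_walk_nth)
    then show ?thesis using k(1) by (auto simp: in_path_interior_iff)
  next
    case False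
    have "snd z = qs ! k" "Suc k < length qs" using False k(2) z by (simp_all add: bounce_walk_nth)
    then show ?thesis using k(1) by (auto simp: in_path_interior_iff)
  qed
qed

lemma distinct_zip_path:
  assumes "distinct ps" "distinct qs"
  shows "distinct (zip_path ps qs)"
proof (cases "length qs \<le> length ps")
  case True
  then have "map fst (zip_path ps qs) = ps"
    by (intro nth_equalityI) (simp_all add: length_zip_path nth_zip_path bounce_walk_nth)
  then show ?thesis using assms(1) by (metis distinct_map)
next
  case False
  then have "map snd (zip_path ps qs) = qs"
    by (intro nth_equalityI) (simp_all add: length_zip_path nth_zip_path bounce_walk_nth)
  then show ?thesis using assms(2) by (metis distinct_map)
qed

lemma is_path_zip_path:
  assumes G: "simple_graph G" and H: "simple_graph H"
    and ps: "is_path G ps" and qs: "is_path H qs"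
    and verts: "verts G \<times> verts H \<subseteq> verts X"
    and direct: "\<And>a a' b b'. adj G a a' \<Longrightarrow> adj H b b' \<Longrightarrow> adj X (a, b) (a', b')"
  shows "is_path X (zip_path ps qs)"
  unfolding is_path_def
proof (intro conjI allI impI)
  have len: "2 \<le> length ps" "2 \<le> length qs" and set: "set ps \<subseteq> verts G" "set qs \<subseteq> verts H"
    using ps qs unfolding is_path_def by auto
  show "2 \<le> length (zip_path ps qs)"
    using len by (simp add: length_zip_path)
  show "distinct (zip_path ps qs)"
    using ps qs unfolding is_path_def by (simp add: distinct_zip_path)
  have "bounce_walk ps k \<in> verts G" "bounce_walk qs k \<in> verts H" for k
    using bounce_le[of "length ps - 1" k] bounce_le[of "length qs - 1" k] len set
    unfolding bounce_walk_def by (auto intro!: nth_mem)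
  then show "set (zip_path ps qs) \<subseteq> verts X"
    using verts unfolding zip_path_def by auto
  fix k assume "Suc k < length (zip_path ps qs)"
  moreover have "adj G (bounce_walk ps k) (bounce_walk ps (Suc k))"
    using adj_of_path_edge[OF G ps bounce_walk_edge[OF len(1)]] .
  moreover have "adj H (bounce_walk qs k) (bounce_walk qs (Suc k))"
    using adj_of_path_edge[OF H qs bounce_walk_edge[OF len(2)]] .
  ultimately show "adj X (zip_path ps qs ! k) (zip_path ps qs ! Suc k)"
    by (simp add: length_zip_path nth_zip_path direct)
qed

lemma hd_zip_path:
  assumes "ps \<noteq> []" "qs \<noteq> []"
  shows "hd (zip_path ps qs) = (hd ps, hd qs)"
proof -
  have "0 < max (length ps) (length qs)"
    using assms by (simp add: less_max_iff_disj)
  then show ?thesis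
    using assms by (simp add: hd_conv_nth length_zip_path nth_zip_path bounce_walk_nth
        flip: length_greater_0_conv)
qed

lemma last_zip_path:
  assumes "odd (length ps - 1)" "odd (length qs - 1)"
  shows "last (zip_path ps qs) = (last ps, last qs)"
proof -
  let ?N = "max (length ps) (length qs) - 1"
  have "?N < max (length ps) (length qs)" "odd ?N" "length ps - 1 \<le> ?N" "length qs - 1 \<le> ?N"
    using assms by (auto simp: max_def)
  then show ?thesis
    using assms by (simp add: last_conv_nth length_zip_path nth_zip_path bounce_walk_last
        flip: length_greater_0_conv)
qed

lemma length_zip_path_odd:
  "odd (length ps - 1) \<Longrightarrow> odd (length qs - 1) \<Longrightarrow> odd (length (zip_path ps qs) - 1)"
  by (simp add: length_zip_path max_def)

(* At every step the two positions u, v have u + v even, while position v of rev qs is position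
   length qs - 1 - v of qs, of the other parity. *)
lemma zip_path_rev_disjoint:
  assumes "distinct ps" "distinct qs" "2 \<le> length ps" "odd (length qs - 1)"
  shows "set (zip_path ps qs) \<inter> set (zip_path ps (rev qs)) = {}"
proof -
  have pos: "\<exists>u v. u < length ps \<and> v < length qs \<and> z = (ps ! u, qs' ! v) \<and> even (u + v)"
    if z: "z \<in> set (zip_path ps qs')" and len: "length qs' = length qs" for z qs'
  proof -
    obtain k where "k < max (length ps) (length qs')" "z = (bounce_walk ps k, bounce_walk qs' k)"
      using z by (auto simp: in_set_conv_nth length_zip_path nth_zip_path)
    moreover obtain u where "u < length ps" "bounce_walk ps k = ps ! u" "even (u + k)"
      using bounce_walk_parity[OF assms(3)] by blast
    moreover obtain v where "v < length qs" "bounce_walk qs' k = qs' ! v" "even (v + k)"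
      using bounce_walk_parity[of qs' k] assms(4) len by (auto simp: two_le_if_odd_pred)
    ultimately show ?thesis by (intro exI[of _ u] exI[of _ v]) auto
  qed
  show ?thesis
  proof (rule ccontr)
    assume "set (zip_path ps qs) \<inter> set (zip_path ps (rev qs)) \<noteq> {}"
    then obtain z where "z \<in> set (zip_path ps qs)" "z \<in> set (zip_path ps (rev qs))" by blast
    then obtain u v u' v' where uv: "u < length ps" "v < length qs" "z = (ps ! u, qs ! v)" "even (u + v)"
      and uv': "u' < length ps" "v' < length qs" "z = (ps ! u', rev qs ! v')" "even (u' + v')"
      using pos[of _ qs] pos[of _ "rev qs"] by (metis length_rev)
    have "u = u'" using uv uv' assms(1) by (simp add: nth_eq_iff_index_eq)
    moreover have "v = length qs - Suc v'"
      using uv uv' assms(2) by (simp add: rev_nth nth_eq_iff_index_eq)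
    ultimately show False
      using uv(4) uv'(2,4) assms(4) by presburger
  qed
qed

section \<open>Graph products\<close>

lemma verts_gprod: "verts (gprod p G H) = verts G \<times> verts H"
  by (cases p) (simp_all add: verts_def)

lemma adj_gprod:
  "adj (gprod Cartesian G H) = cart_adj G H"
  "adj (gprod Direct G H) = direct_adj G H"
  "adj (gprod Strong G H) = (\<lambda>x y. cart_adj G H x y \<or> direct_adj G H x y)"
  "adj (gprod Lexicographic G H) = lex_adj G H"
  by (simp_all add: adj_def)

declare gprod.simps [simp del]

lemma finite_verts_gprod:
  "simple_graph G \<Longrightarrow> simple_graph H \<Longrightarrow> finite (verts (gprod p G H))"
  by (simp add: verts_gprod simple_graph_finite)

lemma simple_graph_gprod:
  assumes G: "simple_graph G" and H: "simple_graph H"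
  shows "simple_graph (gprod p G H)"
proof -
  have "x \<in> verts G \<times> verts H \<and> y \<in> verts G \<times> verts H \<and> adj (gprod p G H) y x \<and> x \<noteq> y"
    if xy: "adj (gprod p G H) x y" for x y
  proof (intro conjI)
    show "x \<in> verts G \<times> verts H" "y \<in> verts G \<times> verts H"
      using xy simple_graph_adjD(1,2)[OF G] simple_graph_adjD(1,2)[OF H]
      by (cases p; auto simp: mem_Times_iff adj_gprod cart_adj_def direct_adj_def lex_adj_def)+
    show "adj (gprod p G H) y x"
      using xy by (cases p) (auto simp: adj_gprod cart_adj_def direct_adj_def lex_adj_def
          simple_graph_adj_commute[OF G] simple_graph_adj_commute[OF H])
    show "x \<noteq> y"
      using xy simple_graph_adjD(4)[OF G] simple_graph_adjD(4)[OF H]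
      by (cases p) (auto simp: adj_gprod cart_adj_def direct_adj_def lex_adj_def)
  qed
  then show ?thesis
    using simple_graph_finite[OF G] simple_graph_finite[OF H]
    unfolding simple_graph_def verts_gprod by blast
qed

lemma is_path_strong_vertical:
  assumes "is_path H qs" "g \<in> verts G"
  shows "is_path (gprod Strong G H) (map (\<lambda>q. (g, q)) qs)"
  using assms by (intro is_path_map)
    (auto simp: is_path_def inj_on_def verts_gprod adj_gprod cart_adj_def)

lemma is_path_strong_horizontal:
  assumes "is_path G ps" "h \<in> verts H"
  shows "is_path (gprod Strong G H) (map (\<lambda>p. (p, h)) ps)"
  using assms by (intro is_path_map)
    (auto simp: is_path_def inj_on_def verts_gprod adj_gprod cart_adj_def)

context odd_immersion
begin

definition track :: "nat \<Rightarrow> nat \<Rightarrow> 'a set set" where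
  "track i j = (if i = j then {{phi i}} else path_edges (P (min i j) (max i j)))"

lemma track_determines_indices:
  assumes "i < t" "j < t" "k < t" "l < t" "E \<in> track i j" "E \<in> track k l"
  shows "{i, j} = {k, l}"
proof -
  have not_singleton: "E \<noteq> {c}" if "E \<in> path_edges (P (min i j) (max i j))" "i \<noteq> j" "i < t" "j < t"
    for i j c
    using that path[of "min i j" "max i j"]
    by (intro path_edge_not_singleton) (auto simp: is_path_def min_def max_def)
  show ?thesis
  proof (cases "i = j")
    case True
    then have "E = {phi i}" using assms(5) by (simp add: track_def)
    then have "k = l" "phi i = phi k"
      using assms(3-6) not_singleton[of k l] by (auto simp: track_def split: if_splits)
    with True show ?thesis
      using inj_onD[OF terminals_inj] assms(1,3) by auto
  next
    case False
    then have E: "E \<in> path_edges (P (min i j) (max i j))" using assms(5) by (simp add: track_def)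
    then have "k \<noteq> l" using assms(1-4,6) not_singleton[OF E False] by (auto simp: track_def)
    then have "E \<in> path_edges (P (min k l) (max k l))" using assms(6) by (simp add: track_def)
    then have "(min i j, max i j) = (min k l, max k l)"
      using E edge_disjoint[of "min i j" "max i j" "min k l" "max k l"] False \<open>k \<noteq> l\<close> assms(1-4)
      by (cases "(min i j, max i j) = (min k l, max k l)") (auto simp: min_def max_def)
    then show ?thesis by (auto simp: min_def max_def split: if_splits)
  qed
qed

end

lemma div_mod_less_mult:
  fixes n a b :: nat
  assumes "n < a * b"
  shows "n div b < a" "n mod b < b"
proof -
  have "0 < b" using assms by (cases b) auto
  then show "n div b < a" "n mod b < b" using assms by (simp_all add: less_mult_imp_div_less)
qed

lemma div_mod_lex_less:
  fixes m n b :: nat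
  assumes "m < n" "n < a * b"
  shows "m div b \<le> n div b" "n div b < a" "m mod b < b" "n mod b < b"
    and "m div b < n div b \<or> m mod b < n mod b"
proof -
  show "m div b \<le> n div b" using assms(1) by (simp add: div_le_mono)
  show "n div b < a" "n mod b < b" "m mod b < b"
    using div_mod_less_mult[OF assms(2)] div_mod_less_mult(2)[OF less_trans[OF assms]] by simp_all
  show "m div b < n div b \<or> m mod b < n mod b"
  proof (cases "m div b < n div b")
    case False
    with \<open>m div b \<le> n div b\<close> have "m = n div b * b + m mod b"
      using div_mult_mod_eq[of m b] by simp
    then show ?thesis using assms(1) div_mult_mod_eq[of n b] by linarith
  qed simp
qed

locale immersion_pair =
  I: odd_immersion G a phi P + J: odd_immersion H b psi Q
  for G :: "'a graph" and a phi P and H :: "'b graph" and b psi Q +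
  assumes simple_G: "simple_graph G" and simple_H: "simple_graph H"
begin

definition Q_dir :: "nat \<Rightarrow> nat \<Rightarrow> 'b list" where
  "Q_dir x y = (if x < y then Q x y else rev (Q y x))"

lemma Q_dir_path:
  assumes "x \<noteq> y" "x < b" "y < b"
  shows "is_path H (Q_dir x y)" "hd (Q_dir x y) = psi x" "last (Q_dir x y) = psi y"
    "odd (length (Q_dir x y) - 1)"
    "path_interior (Q_dir x y) = path_interior (Q (min x y) (max x y))"
    "path_edges (Q_dir x y) = path_edges (Q (min x y) (max x y))"
proof -
  consider "x < y" | "y < x" using assms(1) by linarith
  then have "is_path H (Q_dir x y) \<and> hd (Q_dir x y) = psi x \<and> last (Q_dir x y) = psi y
    \<and> odd (length (Q_dir x y) - 1)
    \<and> path_interior (Q_dir x y) = path_interior (Q (min x y) (max x y))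
    \<and> path_edges (Q_dir x y) = path_edges (Q (min x y) (max x y))"
  proof cases
    case 1
    then show ?thesis
      using J.path J.path_hd J.path_last J.path_odd assms(3) by (simp add: Q_dir_def)
  next
    case 2
    have "Q y x \<noteq> []" using J.path[OF 2 assms(2)] by (auto simp: is_path_def)
    then show ?thesis
      using 2 is_path_rev[OF simple_H J.path[OF 2 assms(2)]] J.path_hd J.path_last J.path_odd assms(2)
      by (simp add: Q_dir_def hd_rev last_rev path_interior_rev path_edges_rev)
  qed
  then show "is_path H (Q_dir x y)" "hd (Q_dir x y) = psi x" "last (Q_dir x y) = psi y"
    "odd (length (Q_dir x y) - 1)"
    "path_interior (Q_dir x y) = path_interior (Q (min x y) (max x y))"
    "path_edges (Q_dir x y) = path_edges (Q (min x y) (max x y))"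
    by simp_all
qed

(* Only used for (i, x) lexicographically before (j, y), i.e. i \<le> j and (i < j \<or> x < y). *)
definition strong_path :: "nat \<Rightarrow> nat \<Rightarrow> nat \<Rightarrow> nat \<Rightarrow> ('a \<times> 'b) list" where
  "strong_path i x j y =
     (if i = j then map (\<lambda>q. (phi i, q)) (Q x y)
      else if x = y then map (\<lambda>p. (p, psi x)) (P i j)
      else zip_path (P i j) (Q_dir x y))"

lemma strong_path_is_odd_path:
  assumes ord: "i \<le> j" "j < a" "x < b" "y < b" "i < j \<or> x < y"
  shows "is_path (gprod Strong G H) (strong_path i x j y)"
    and "hd (strong_path i x j y) = (phi i, psi x)"
    and "last (strong_path i x j y) = (phi j, psi y)"
    and "odd (length (strong_path i x j y) - 1)"
proof -
  let ?S = "gprod Strong G H"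
  consider "i = j" | "i \<noteq> j" "x = y" | "i \<noteq> j" "x \<noteq> y" by blast
  then have "is_path ?S (strong_path i x j y) \<and> hd (strong_path i x j y) = (phi i, psi x)
    \<and> last (strong_path i x j y) = (phi j, psi y) \<and> odd (length (strong_path i x j y) - 1)"
  proof cases
    case 1
    with ord have xy: "x < y" "y < b" by auto
    have "Q x y \<noteq> []" using J.path[OF xy] by (auto simp: is_path_def)
    then show ?thesis
      using 1 ord(2) is_path_strong_vertical[OF J.path[OF xy] I.terminal_in_verts]
        J.path_hd[OF xy] J.path_last[OF xy] J.path_odd[OF xy]
      by (simp add: strong_path_def hd_map last_map)
  next
    case 2
    with ord have ij: "i < j" "j < a" by auto
    have "P i j \<noteq> []" using I.path[OF ij] by (auto simp: is_path_def)
    then show ?thesis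
      using 2 ord(3) is_path_strong_horizontal[OF I.path[OF ij] J.terminal_in_verts]
        I.path_hd[OF ij] I.path_last[OF ij] I.path_odd[OF ij]
      by (simp add: strong_path_def hd_map last_map)
  next
    case 3
    with ord have ij: "i < j" "j < a" by auto
    note Q_xy = Q_dir_path[OF 3(2) ord(3,4)]
    have "is_path ?S (zip_path (P i j) (Q_dir x y))"
      by (rule is_path_zip_path[OF simple_G simple_H I.path[OF ij] Q_xy(1)])
        (simp_all add: verts_gprod adj_gprod direct_adj_def)
    moreover have "P i j \<noteq> []" "Q_dir x y \<noteq> []"
      using I.path[OF ij] Q_xy(1) by (auto simp: is_path_def)
    moreover have "odd (length (zip_path (P i j) (Q_dir x y)) - 1)"
      using I.path_odd[OF ij] Q_xy(4) by (rule length_zip_path_odd)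
    ultimately show ?thesis
      using 3 I.path_hd[OF ij] I.path_last[OF ij] I.path_odd[OF ij] Q_xy(2-4)
      by (simp add: strong_path_def hd_zip_path last_zip_path)
  qed
  then show "is_path ?S (strong_path i x j y)" "hd (strong_path i x j y) = (phi i, psi x)"
    "last (strong_path i x j y) = (phi j, psi y)" "odd (length (strong_path i x j y) - 1)"
    by simp_all
qed

lemma terminal_not_in_strong_path_interior:
  assumes ord: "i \<le> j" "j < a" "x < b" "y < b" "i < j \<or> x < y" and "k < a" "z < b"
  shows "(phi k, psi z) \<notin> path_interior (strong_path i x j y)"
proof -
  consider "i = j" | "i \<noteq> j" "x = y" | "i \<noteq> j" "x \<noteq> y" by blast
  then show ?thesis
  proof cases
    case 1
    with ord have "x < y" by simp
    then show ?thesis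
      using 1 J.terminal_not_interior assms by (auto simp: strong_path_def path_interior_map)
  next
    case 2
    with ord have "i < j" by simp
    then show ?thesis
      using 2 I.terminal_not_interior assms by (auto simp: strong_path_def path_interior_map)
  next
    case 3
    with ord have ij: "i < j" "j < a" by auto
    have "min x y < max x y" "max x y < b" using 3 ord by auto
    then show ?thesis
      using 3 path_interior_zip_path[of "(phi k, psi z)" "P i j" "Q_dir x y"]
        I.terminal_not_interior[OF ij] J.terminal_not_interior Q_dir_path(5)[OF 3(2) ord(3,4)] assms(6,7)
      by (auto simp: strong_path_def)
  qed
qed

lemma strong_path_edge_tracks:
  assumes ord: "i \<le> j" "j < a" "x < b" "y < b" "i < j \<or> x < y"
    and e: "e \<in> path_edges (strong_path i x j y)"
  shows "fst ` e \<in> I.track i j" "snd ` e \<in> J.track x y"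
proof -
  consider "i = j" | "i \<noteq> j" "x = y" | "i \<noteq> j" "x \<noteq> y" by blast
  then have "fst ` e \<in> I.track i j \<and> snd ` e \<in> J.track x y"
  proof cases
    case 1
    with ord have xy: "x < y" by simp
    from e 1 obtain e' where "e' \<in> path_edges (Q x y)" "e = (\<lambda>q. (phi i, q)) ` e'"
      by (auto simp: strong_path_def path_edges_map)
    moreover from this(1) have "e' \<noteq> {}" by (auto elim: path_edgesE)
    ultimately show ?thesis
      using 1 xy by (auto simp: I.track_def J.track_def image_image)
  next
    case 2
    from e 2 obtain e' where "e' \<in> path_edges (P i j)" "e = (\<lambda>p. (p, psi x)) ` e'"
      by (auto simp: strong_path_def path_edges_map)
    moreover from this(1) have "e' \<noteq> {}" by (auto elim: path_edgesE)
    ultimately show ?thesis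
      using 2 ord(1) by (auto simp: I.track_def J.track_def image_image min_def max_def)
  next
    case 3
    with ord have ij: "i < j" "j < a" by auto
    have len: "2 \<le> length (P i j)" "2 \<le> length (Q_dir x y)"
      using I.path[OF ij] Q_dir_path(1)[OF 3(2) ord(3,4)] by (simp_all add: is_path_def)
    have "e \<in> path_edges (zip_path (P i j) (Q_dir x y))"
      using e 3 by (simp add: strong_path_def)
    then show ?thesis
      using path_edges_zip_path[OF _ len] 3 ij Q_dir_path(6)[OF 3(2) ord(3,4)]
      by (simp add: I.track_def J.track_def)
  qed
  then show "fst ` e \<in> I.track i j" "snd ` e \<in> J.track x y" by simp_all
qed

lemma strong_paths_vertex_disjoint:
  assumes "i < j" "j < a" "x \<noteq> y" "x < b" "y < b"
  shows "set (strong_path i x j y) \<inter> set (strong_path i y j x) = {}"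
proof -
  have "Q_dir y x = rev (Q_dir x y)" using assms(3) by (auto simp: Q_dir_def)
  moreover have "distinct (P i j)" "2 \<le> length (P i j)" "distinct (Q_dir x y)"
    using I.path[OF assms(1,2)] Q_dir_path(1)[OF assms(3-5)] by (simp_all add: is_path_def)
  ultimately show ?thesis
    using zip_path_rev_disjoint Q_dir_path(4)[OF assms(3-5)] assms(1,3) by (simp add: strong_path_def)
qed

(* The projections of a common edge recover {i, j} and {x, y}; the remaining clash between the
   paths for (i, x), (j, y) and for (i, y), (j, x) is excluded by strong_paths_vertex_disjoint. *)
lemma strong_paths_edge_disjoint:
  assumes ord1: "i \<le> j" "j < a" "x < b" "y < b" "i < j \<or> x < y"
    and ord2: "k \<le> l" "l < a" "z < b" "w < b" "k < l \<or> z < w"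
    and ne: "(i, x, j, y) \<noteq> (k, z, l, w)"
  shows "path_edges (strong_path i x j y) \<inter> path_edges (strong_path k z l w) = {}"
proof (rule ccontr)
  assume "path_edges (strong_path i x j y) \<inter> path_edges (strong_path k z l w) \<noteq> {}"
  then obtain e where e1: "e \<in> path_edges (strong_path i x j y)"
    and e2: "e \<in> path_edges (strong_path k z l w)" by blast
  have "{i, j} = {k, l}"
    using ord1 ord2 by (intro I.track_determines_indices[OF _ _ _ _
        strong_path_edge_tracks(1)[OF ord1 e1] strong_path_edge_tracks(1)[OF ord2 e2]]) auto
  with ord1(1) ord2(1) have ik: "i = k" "j = l" by (auto simp: doubleton_eq_iff)
  have "{x, y} = {z, w}"
    using ord1 ord2 by (intro J.track_determines_indices[OF _ _ _ _
        strong_path_edge_tracks(2)[OF ord1 e1] strong_path_edge_tracks(2)[OF ord2 e2]]) auto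
  with ne ik have swapped: "z = y" "w = x" "x \<noteq> y" by (auto simp: doubleton_eq_iff)
  have "i < j"
    using ik swapped ord1(1,5) ord2(5) by fastforce
  have "e \<noteq> {}" using e1 by (auto elim: path_edgesE)
  moreover have "e \<subseteq> set (strong_path i x j y)" "e \<subseteq> set (strong_path i y j x)"
    using e1 e2 ik swapped by (auto dest: path_edges_subset)
  ultimately show False
    using strong_paths_vertex_disjoint[OF \<open>i < j\<close> ord1(2) swapped(3) ord1(3,4)] by blast
qed

lemma strong_immersion:
  "odd_immersion (gprod Strong G H) (a * b) (\<lambda>n. (phi (n div b), psi (n mod b)))
     (\<lambda>m n. strong_path (m div b) (m mod b) (n div b) (n mod b))"
proof
  show "inj_on (\<lambda>n. (phi (n div b), psi (n mod b))) {0..<a * b}"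
  proof (rule inj_onI)
    fix m n assume "m \<in> {0..<a * b}" "n \<in> {0..<a * b}"
      and "(phi (m div b), psi (m mod b)) = (phi (n div b), psi (n mod b))"
    then have "m div b = n div b" "m mod b = n mod b"
      using div_mod_less_mult inj_onD[OF I.terminals_inj] inj_onD[OF J.terminals_inj] by auto
    then show "m = n" by (metis div_mult_mod_eq)
  qed
  show "(\<lambda>n. (phi (n div b), psi (n mod b))) ` {0..<a * b} \<subseteq> verts (gprod Strong G H)"
    using div_mod_less_mult I.terminal_in_verts J.terminal_in_verts by (auto simp: verts_gprod)
next
  fix m n assume mn: "m < n" "n < a * b"
  note ord = div_mod_lex_less[OF mn]
  show "is_path (gprod Strong G H) (strong_path (m div b) (m mod b) (n div b) (n mod b))"
    "hd (strong_path (m div b) (m mod b) (n div b) (n mod b)) = (phi (m div b), psi (m mod b))"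
    "last (strong_path (m div b) (m mod b) (n div b) (n mod b)) = (phi (n div b), psi (n mod b))"
    "odd (length (strong_path (m div b) (m mod b) (n div b) (n mod b)) - 1)"
    using strong_path_is_odd_path[OF ord] by simp_all
  show "(phi (k div b), psi (k mod b)) \<notin> path_interior (strong_path (m div b) (m mod b) (n div b) (n mod b))"
    if "k < a * b" for k
    using terminal_not_in_strong_path_interior[OF ord div_mod_less_mult[OF that]] .
next
  fix m n m' n' assume mn: "m < n" "n < a * b" and mn': "m' < n'" "n' < a * b"
    and "(m, n) \<noteq> (m', n')"
  then have "(m div b, m mod b, n div b, n mod b) \<noteq> (m' div b, m' mod b, n' div b, n' mod b)"
    by (metis div_mult_mod_eq prod.inject)
  then show "path_edges (strong_path (m div b) (m mod b) (n div b) (n mod b))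
      \<inter> path_edges (strong_path (m' div b) (m' mod b) (n' div b) (n' mod b)) = {}"
    by (rule strong_paths_edge_disjoint[OF div_mod_lex_less[OF mn] div_mod_lex_less[OF mn']])
qed

lemma direct_immersion:
  assumes "a = b"
  shows "odd_immersion (gprod Direct G H) a (\<lambda>i. (phi i, psi i)) (\<lambda>i j. zip_path (P i j) (Q i j))"
proof
  have verts_D: "verts G \<times> verts H \<subseteq> verts (gprod Direct G H)" by (simp add: verts_gprod)
  have len: "2 \<le> length (P i j)" "2 \<le> length (Q i j)" if "i < j" "j < a" for i j
    using I.path[OF that] J.path[of i j] that assms by (simp_all add: is_path_def)
  show "inj_on (\<lambda>i. (phi i, psi i)) {0..<a}"
    using I.terminals_inj by (simp add: inj_on_def)
  show "(\<lambda>i. (phi i, psi i)) ` {0..<a} \<subseteq> verts (gprod Direct G H)"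
    using I.terminal_in_verts J.terminal_in_verts assms by (auto simp: verts_gprod)
  fix i j assume ij: "i < j" "j < a"
  with assms have ij': "i < j" "j < b" by simp_all
  show "is_path (gprod Direct G H) (zip_path (P i j) (Q i j))"
    by (rule is_path_zip_path[OF simple_G simple_H I.path[OF ij] J.path[OF ij'] verts_D])
      (simp add: adj_gprod direct_adj_def)
  have "P i j \<noteq> []" "Q i j \<noteq> []" using len[OF ij] by auto
  then show "hd (zip_path (P i j) (Q i j)) = (phi i, psi i)"
    using I.path_hd[OF ij] J.path_hd[OF ij'] by (simp add: hd_zip_path)
  show "last (zip_path (P i j) (Q i j)) = (phi j, psi j)"
    using I.path_odd[OF ij] J.path_odd[OF ij'] I.path_last[OF ij] J.path_last[OF ij']
    by (simp add: last_zip_path)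
  show "odd (length (zip_path (P i j) (Q i j)) - 1)"
    using I.path_odd[OF ij] J.path_odd[OF ij'] by (rule length_zip_path_odd)
  show "(phi k, psi k) \<notin> path_interior (zip_path (P i j) (Q i j))" if "k < a" for k
    using path_interior_zip_path[of "(phi k, psi k)" "P i j" "Q i j"]
      I.terminal_not_interior[OF ij that] J.terminal_not_interior[OF ij'] that assms by auto
  fix k l assume kl: "k < l" "l < a" "(i, j) \<noteq> (k, l)"
  show "path_edges (zip_path (P i j) (Q i j)) \<inter> path_edges (zip_path (P k l) (Q k l)) = {}"
    using path_edges_zip_path(1)[OF _ len[OF ij]] path_edges_zip_path(1)[OF _ len[OF kl(1,2)]]
      I.edge_disjoint[OF ij kl] by blast
qed

end

lemma has_toi_Kt_strong:
  assumes "simple_graph G" "simple_graph H" "has_toi_Kt G a" "has_toi_Kt H b"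
  shows "has_toi_Kt (gprod Strong G H) (a * b)"
proof -
  obtain phi P psi Q where "odd_immersion G a phi P" "odd_immersion H b psi Q"
    using assms(3,4) unfolding has_toi_Kt_iff by blast
  then interpret immersion_pair G a phi P H b psi Q
    using assms(1,2) by (simp add: immersion_pair_def immersion_pair_axioms_def)
  show ?thesis
    unfolding has_toi_Kt_iff using strong_immersion by blast
qed

lemma has_toi_Kt_direct:
  assumes "simple_graph G" "simple_graph H" "has_toi_Kt G t" "has_toi_Kt H t"
  shows "has_toi_Kt (gprod Direct G H) t"
proof -
  obtain phi P psi Q where "odd_immersion G t phi P" "odd_immersion H t psi Q"
    using assms(3,4) unfolding has_toi_Kt_iff by blast
  then interpret immersion_pair G t phi P H t psi Q
    using assms(1,2) by (simp add: immersion_pair_def immersion_pair_axioms_def)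
  show ?thesis
    unfolding has_toi_Kt_iff using direct_immersion by blast
qed

section \<open>Colourings of products\<close>

lemma chi_le_mult:
  assumes G: "simple_graph G" and H: "simple_graph H" and X: "simple_graph X"
    and verts: "verts X \<subseteq> verts G \<times> verts H"
    and adj: "\<And>x y. adj X x y \<Longrightarrow> adj G (fst x) (fst y) \<or> (fst x = fst y \<and> adj H (snd x) (snd y))"
  shows "chi X \<le> chi G * chi H"
proof -
  obtain c where c: "\<forall>v\<in>verts G. c v < chi G" "\<forall>u v. adj G u v \<longrightarrow> c u \<noteq> c v"
    using chi_colouringE[OF G] .
  obtain d where d: "\<forall>v\<in>verts H. d v < chi H" "\<forall>u v. adj H u v \<longrightarrow> d u \<noteq> d v"
    using chi_colouringE[OF H] .
  let ?colour = "\<lambda>x. c (fst x) * chi H + d (snd x)"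
  have decode: "?colour x div chi H = c (fst x)" "?colour x mod chi H = d (snd x)"
    if "x \<in> verts X" for x
  proof -
    have "d (snd x) < chi H" using that verts d(1) by auto
    then show "?colour x div chi H = c (fst x)" "?colour x mod chi H = d (snd x)" by simp_all
  qed
  show ?thesis
  proof (rule chi_le_colouring)
    show "\<forall>x\<in>verts X. ?colour x < chi G * chi H"
    proof
      fix x assume "x \<in> verts X"
      then have "c (fst x) < chi G" "d (snd x) < chi H"
        using verts c(1) d(1) by auto
      then have "?colour x < Suc (c (fst x)) * chi H" by simp
      also have "\<dots> \<le> chi G * chi H"
        using \<open>c (fst x) < chi G\<close> by (intro mult_le_mono1) simp
      finally show "?colour x < chi G * chi H" .
    qed
    show "\<forall>x y. adj X x y \<longrightarrow> ?colour x \<noteq> ?colour y"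
    proof (intro allI impI notI)
      fix x y assume xy: "adj X x y" and eq: "?colour x = ?colour y"
      then have "c (fst x) = c (fst y)" "d (snd x) = d (snd y)"
        using decode[OF simple_graph_adjD(1)[OF X xy]] decode[OF simple_graph_adjD(2)[OF X xy]]
        by simp_all
      then show False
        using adj[OF xy] c(2) d(2) by blast
    qed
  qed
qed

lemma mod_add_left_inj:
  fixes a x y k :: nat
  assumes "x < k" "y < k" "(a + x) mod k = (a + y) mod k"
  shows "x = y"
proof -
  have "v = u" if "u \<le> v" "v < k" "(a + u) mod k = (a + v) mod k" for u v
  proof -
    have "k dvd v - u"
      using mod_eq_dvd_iff_nat[of "a + u" "a + v" k] that by simp
    moreover have "v - u < k" using that(2) by linarith
    ultimately have "v - u = 0" using nat_dvd_not_less by blast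
    with that(1) show ?thesis by simp
  qed
  from this[of x y] this[of y x] assms show ?thesis by linarith
qed

lemma chi_cartesian_le:
  assumes G: "simple_graph G" and H: "simple_graph H"
  shows "chi (gprod Cartesian G H) \<le> max (chi G) (chi H)"
proof -
  let ?X = "gprod Cartesian G H" and ?k = "max (chi G) (chi H)"
  obtain c where c: "\<forall>v\<in>verts G. c v < chi G" "\<forall>u v. adj G u v \<longrightarrow> c u \<noteq> c v"
    using chi_colouringE[OF G] .
  obtain d where d: "\<forall>v\<in>verts H. d v < chi H" "\<forall>u v. adj H u v \<longrightarrow> d u \<noteq> d v"
    using chi_colouringE[OF H] .
  have bounds: "c (fst x) < ?k" "d (snd x) < ?k" if "x \<in> verts ?X" for x
    using that c(1) d(1) by (auto simp: verts_gprod less_max_iff_disj)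
  show ?thesis
  proof (rule chi_le_colouring[of _ "\<lambda>x. (c (fst x) + d (snd x)) mod ?k"])
    show "\<forall>x\<in>verts ?X. (c (fst x) + d (snd x)) mod ?k < ?k"
    proof
      fix x assume "x \<in> verts ?X"
      from bounds(1)[OF this] have "0 < ?k" by linarith
      then show "(c (fst x) + d (snd x)) mod ?k < ?k" by simp
    qed
    show "\<forall>x y. adj ?X x y \<longrightarrow> (c (fst x) + d (snd x)) mod ?k \<noteq> (c (fst y) + d (snd y)) mod ?k"
    proof (intro allI impI notI)
      fix x y assume xy: "adj ?X x y" and eq: "(c (fst x) + d (snd x)) mod ?k = (c (fst y) + d (snd y)) mod ?k"
      have "x \<in> verts ?X" "y \<in> verts ?X"
        using simple_graph_adjD(1,2)[OF simple_graph_gprod[OF G H] xy] by simp_all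
      note bound_x = bounds[OF this(1)] and bound_y = bounds[OF this(2)]
      from xy show False
        unfolding adj_gprod cart_adj_def
      proof (elim disjE conjE)
        assume "fst x = fst y" "adj H (snd x) (snd y)"
        then show False
          using mod_add_left_inj[OF bound_x(2) bound_y(2)] eq d(2) by auto
      next
        assume "snd x = snd y" "adj G (fst x) (fst y)"
        then show False
          using mod_add_left_inj[OF bound_x(1) bound_y(1), of "d (snd x)"] eq c(2) by (auto simp: add.commute)
      qed
    qed
  qed
qed

lemma chi_direct_le:
  assumes G: "simple_graph G" and H: "simple_graph H"
  shows "chi (gprod Direct G H) \<le> min (chi G) (chi H)"
proof -
  have "chi (gprod Direct G H) \<le> chi G"
    by (rule chi_le_of_hom[OF G, of fst]) (auto simp: verts_gprod adj_gprod direct_adj_def)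
  moreover have "chi (gprod Direct G H) \<le> chi H"
    by (rule chi_le_of_hom[OF H, of snd]) (auto simp: verts_gprod adj_gprod direct_adj_def)
  ultimately show ?thesis by simp
qed

lemma toi_cartesian_ge:
  assumes G: "simple_graph G" and H: "simple_graph H" and "verts G \<noteq> {}" "verts H \<noteq> {}"
  shows "max (toi G) (toi H) \<le> toi (gprod Cartesian G H)"
proof -
  obtain g h where gh: "g \<in> verts G" "h \<in> verts H" using assms(3,4) by blast
  have fin: "finite (verts (gprod Cartesian G H))" by (rule finite_verts_gprod[OF G H])
  have "toi G \<le> toi (gprod Cartesian G H)"
    by (rule toi_le_of_injective_hom[OF simple_graph_finite[OF G] fin, of "\<lambda>u. (u, h)"])
      (use gh in \<open>auto simp: inj_on_def verts_gprod adj_gprod cart_adj_def\<close>)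
  moreover have "toi H \<le> toi (gprod Cartesian G H)"
    by (rule toi_le_of_injective_hom[OF simple_graph_finite[OF H] fin, of "\<lambda>v. (g, v)"])
      (use gh in \<open>auto simp: inj_on_def verts_gprod adj_gprod cart_adj_def\<close>)
  ultimately show ?thesis by simp
qed

lemma toi_direct_ge:
  assumes G: "simple_graph G" and H: "simple_graph H"
  shows "min (toi G) (toi H) \<le> toi (gprod Direct G H)"
proof -
  have "has_toi_Kt G (min (toi G) (toi H))" "has_toi_Kt H (min (toi G) (toi H))"
    using has_toi_Kt_toi[OF simple_graph_finite[OF G]] has_toi_Kt_toi[OF simple_graph_finite[OF H]]
    by (auto intro: has_toi_Kt_mono)
  then show ?thesis
    by (intro has_toi_Kt_le_toi finite_verts_gprod G H has_toi_Kt_direct)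
qed

lemma toi_strong_ge:
  assumes G: "simple_graph G" and H: "simple_graph H"
  shows "toi G * toi H \<le> toi (gprod Strong G H)"
  using has_toi_Kt_toi[OF simple_graph_finite[OF G]] has_toi_Kt_toi[OF simple_graph_finite[OF H]]
  by (intro has_toi_Kt_le_toi finite_verts_gprod G H has_toi_Kt_strong)

lemma toi_strong_le_lexicographic:
  assumes G: "simple_graph G" and H: "simple_graph H"
  shows "toi (gprod Strong G H) \<le> toi (gprod Lexicographic G H)"
proof (rule toi_le_of_injective_hom[OF finite_verts_gprod[OF G H] finite_verts_gprod[OF G H], of id])
  fix x y assume "adj (gprod Strong G H) x y"
  then show "adj (gprod Lexicographic G H) (id x) (id y)"
    using simple_graph_adjD(1,2)[OF H]
    by (auto simp: adj_gprod cart_adj_def direct_adj_def lex_adj_def)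
qed (simp_all add: verts_gprod)

theorem chi_le_toi_gprod:
  assumes G: "simple_graph G" and H: "simple_graph H" and "verts G \<noteq> {}" "verts H \<noteq> {}"
    and "chi G \<le> toi G" "chi H \<le> toi H"
  shows "chi (gprod p G H) \<le> toi (gprod p G H)"
proof (cases p)
  case Cartesian
  have "chi (gprod Cartesian G H) \<le> max (chi G) (chi H)" by (rule chi_cartesian_le[OF G H])
  also have "\<dots> \<le> max (toi G) (toi H)" using assms(5,6) by (rule max.mono)
  also have "\<dots> \<le> toi (gprod Cartesian G H)" by (rule toi_cartesian_ge[OF assms(1-4)])
  finally show ?thesis using Cartesian by simp
next
  case Direct
  have "chi (gprod Direct G H) \<le> min (chi G) (chi H)" by (rule chi_direct_le[OF G H])
  also have "\<dots> \<le> min (toi G) (toi H)" using assms(5,6) by (rule min.mono)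
  also have "\<dots> \<le> toi (gprod Direct G H)" by (rule toi_direct_ge[OF G H])
  finally show ?thesis using Direct by simp
next
  case Strong
  have "chi (gprod Strong G H) \<le> chi G * chi H"
    using simple_graph_gprod[OF G H]
    by (rule chi_le_mult[OF G H]) (auto simp: verts_gprod adj_gprod cart_adj_def direct_adj_def)
  also have "\<dots> \<le> toi G * toi H" using assms(5,6) by (rule mult_le_mono)
  also have "\<dots> \<le> toi (gprod Strong G H)" by (rule toi_strong_ge[OF G H])
  finally show ?thesis using Strong by simp
next
  case Lexicographic
  have "chi (gprod Lexicographic G H) \<le> chi G * chi H"
    using simple_graph_gprod[OF G H]
    by (rule chi_le_mult[OF G H]) (auto simp: verts_gprod adj_gprod lex_adj_def)
  also have "\<dots> \<le> toi G * toi H" using assms(5,6) by (rule mult_le_mono)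
  also have "\<dots> \<le> toi (gprod Strong G H)" by (rule toi_strong_ge[OF G H])
  also have "\<dots> \<le> toi (gprod Lexicographic G H)" by (rule toi_strong_le_lexicographic[OF G H])
  finally show ?thesis using Lexicographic by simp
qed

theorem mainTheorem2:
  fixes G :: "'a graph" and H :: "'b graph" and p :: prodkind
  assumes "simple_graph G" and "simple_graph H"
    and "card (verts G) \<ge> 2" and "card (verts H) \<ge> 2"
  shows "\<not> min_counterexample (gprod p G H)"
proof
  assume min: "min_counterexample (gprod p G H)"
  have card: "card (verts (gprod p G H)) = card (verts G) * card (verts H)"
    by (simp add: verts_gprod card_cartesian_product)
  have "card (verts G) < card (verts (gprod p G H))" "card (verts H) < card (verts (gprod p G H))"
    using assms(3,4) unfolding card by simp_all
  then have "chi G \<le> toi G" "chi H \<le> toi H"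
    using min_counterexample_smaller[OF min] assms(1,2) by blast+
  moreover have "verts G \<noteq> {}" "verts H \<noteq> {}"
    using assms(3,4) by auto
  ultimately have "chi (gprod p G H) \<le> toi (gprod p G H)"
    using chi_le_toi_gprod assms(1,2) by blast
  with min show False
    unfolding min_counterexample_def by simp
qed

end
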